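(* For every positive integer $q$, \[ L_s(2,q) = 2^{q(q-1)} N_s(q) - 1 \quad\text{and}\quad L_e(2,q) = 2^{q(q-1)} N_e(q). \]
   Context: All graphs are simple undirected labeled graphs on the vertex set $\{1,\dots,n\}$. For such a graph with adjacency matrix $W$ and degree matrix $D$, its Laplacian is $L = D - W$; if the graph has at least one edge, its normalized Laplacian matrix is $\frac{1}{\mathrm{Tr}(L)}L$, which is a density matrix (Hermitian, positive semidefinite, trace $1$). An $n\times n$ density matrix $\rho$ with $n=pq$ is separable in $\mathbb{C}^p\otimes\mathbb{C}^q$ if $\rho=\sum_i c_i\,\rho_i\otimes\eta_i$ (finite sum) where the $\rho_i$ are $p\times p$ density matrices, the $\eta_i$ are $q\times q$ density matrices, $c_i\ge 0$ and $\sum_i c_i=1$; otherwise it is entangled. $L_s(p,q)$ denotes the number of labeled graphs on $n=pq$ vertices with at least one edge whose normalized Laplacian matrix is separable in $\mathbb{C}^p\otimes\mathbb{C}^q$, and $L_e(p,q)$ the number of those whose normalized Laplacian is entangled; thus $L_s(p,q)+L_e(p,q)=L(pq):=2^{pq(pq-1)/2}-1$. A square matrix is line sum symmetric if for each $i$ its $i$-th row sum equals its $i$-th column sum. $N_s(n)$ denotes the number of $n\times n$ matrices with entries in $\{0,1\}$ that are line sum symmetric, and $N_e(n)=2^{n^2}-N_s(n)$ the number of $n\times n$ $0$-$1$ matrices that are not line sum symmetric. *)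

theory Defs
  imports Complex_Main "HOL-Library.FuncSet"
begin

text \<open>Square complex matrices of dimension d are represented as functions
  nat \<Rightarrow> nat \<Rightarrow> complex; only entries with indices below d matter.
  Vertices/indices are 0-based: vertex i of the paper corresponds to index i-1.\<close>

type_synonym cmat = "nat \<Rightarrow> nat \<Rightarrow> complex"

definition mat_eq :: "nat \<Rightarrow> cmat \<Rightarrow> cmat \<Rightarrow> bool" where
  "mat_eq d A B \<longleftrightarrow> (\<forall>i<d. \<forall>j<d. A i j = B i j)"

definition hermitian_mat :: "nat \<Rightarrow> cmat \<Rightarrow> bool" where
  "hermitian_mat d A \<longleftrightarrow> (\<forall>i<d. \<forall>j<d. A i j = cnj (A j i))"

definition psd_mat :: "nat \<Rightarrow> cmat \<Rightarrow> bool" where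
  "psd_mat d A \<longleftrightarrow> (\<forall>v :: nat \<Rightarrow> complex.
      0 \<le> Re (\<Sum>i<d. \<Sum>j<d. cnj (v i) * A i j * v j))"

definition mat_trace :: "nat \<Rightarrow> cmat \<Rightarrow> complex" where
  "mat_trace d A = (\<Sum>i<d. A i i)"

definition density_mat :: "nat \<Rightarrow> cmat \<Rightarrow> bool" where
  "density_mat d A \<longleftrightarrow> hermitian_mat d A \<and> psd_mat d A \<and> mat_trace d A = 1"

definition kron :: "nat \<Rightarrow> cmat \<Rightarrow> cmat \<Rightarrow> cmat" where
  "kron q A B = (\<lambda>i j. A (i div q) (j div q) * B (i mod q) (j mod q))"

definition separable :: "nat \<Rightarrow> nat \<Rightarrow> cmat \<Rightarrow> bool" where
  "separable p q \<rho> \<longleftrightarrow> (\<exists>(m::nat) (c::nat \<Rightarrow> real) (R::nat \<Rightarrow> cmat) (H::nat \<Rightarrow> cmat).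
      (\<forall>k<m. c k \<ge> 0 \<and> density_mat p (R k) \<and> density_mat q (H k)) \<and>
      (\<Sum>k<m. c k) = 1 \<and>
      mat_eq (p*q) \<rho> (\<lambda>i j. \<Sum>k<m. complex_of_real (c k) * kron q (R k) (H k) i j))"

text \<open>Simple graphs on vertex set {0..<n}: sets of 2-element subsets.\<close>
definition all_edges :: "nat \<Rightarrow> nat set set" where
  "all_edges n = {{i, j} | i j. i < n \<and> j < n \<and> i \<noteq> j}"

definition degree :: "nat set set \<Rightarrow> nat \<Rightarrow> nat" where
  "degree E i = card {e \<in> E. i \<in> e}"

definition laplacian :: "nat set set \<Rightarrow> cmat" where
  "laplacian E = (\<lambda>i j. if i = j then of_nat (degree E i)
                        else if {i, j} \<in> E then -1 else 0)"

definition norm_laplacian :: "nat \<Rightarrow> nat set set \<Rightarrow> cmat" where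
  "norm_laplacian n E = (\<lambda>i j. laplacian E i j / mat_trace n (laplacian E))"

definition L_s :: "nat \<Rightarrow> nat \<Rightarrow> nat" where
  "L_s p q = card {E. E \<subseteq> all_edges (p*q) \<and> E \<noteq> {} \<and>
                      separable p q (norm_laplacian (p*q) E)}"

definition L_e :: "nat \<Rightarrow> nat \<Rightarrow> nat" where
  "L_e p q = card {E. E \<subseteq> all_edges (p*q) \<and> E \<noteq> {} \<and>
                      \<not> separable p q (norm_laplacian (p*q) E)}"

definition line_sum_symmetric :: "nat \<Rightarrow> (nat \<times> nat \<Rightarrow> nat) \<Rightarrow> bool" where
  "line_sum_symmetric n M \<longleftrightarrow> (\<forall>i<n. (\<Sum>j<n. M (i, j)) = (\<Sum>j<n. M (j, i)))"

definition zero_one_mats :: "nat \<Rightarrow> (nat \<times> nat \<Rightarrow> nat) set" where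
  "zero_one_mats n = ({..<n} \<times> {..<n}) \<rightarrow>\<^sub>E {0, 1}"

definition N_s :: "nat \<Rightarrow> nat" where
  "N_s n = card {M \<in> zero_one_mats n. line_sum_symmetric n M}"

definition N_e :: "nat \<Rightarrow> nat" where
  "N_e n = 2 ^ (n^2) - N_s n"

end

theory Submission
  imports Defs "HOL-Library.Complex_Order" "HOL-Combinatorics.Cycles"
begin

(* Index i = a*q + b stands for e_a \<otimes> e_b in \<complex>\<^sup>2 \<otimes> \<complex>\<^sup>q, so the 2q vertices form two blocks of
   size q. The Laplacian of an edge inside a block is the projection onto the product vector
   e_a \<otimes> (e_b - e_b'), so separability depends only on the q \<times> q 0-1 matrix B of edges between
   the blocks, and it holds exactly when B is line sum symmetric.
   If B is line sum symmetric, the edges between the blocks split into closed walks, and a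
   discrete Fourier transform along each walk writes their Laplacian as a sum of product states.
   Conversely, the rows of a Laplacian sum to zero; positivity forces every term of a separable
   decomposition to have zero row sums in one of its factors, so the partial transpose has zero
   row sums too, and comparing the two says that B is line sum symmetric.
   Counting then leaves the q(q-1) edges inside the blocks free, and L_s excludes the empty graph. *)

lemma mult_add_less_mult:
  fixes a b p q :: nat
  assumes "a < p" "b < q"
  shows "a*q + b < p*q"
proof -
  have "a*q + b < Suc a * q" using assms by simp
  also have "\<dots> \<le> p*q" using assms Suc_leI mult_le_mono1 by blast
  finally show ?thesis .
qed

lemma sum_lessThan_mult_divmod:
  fixes f :: "nat \<Rightarrow> nat \<Rightarrow> 'a::comm_monoid_add"
  assumes "q > 0"
  shows "(\<Sum>i<p*q. f (i div q) (i mod q)) = (\<Sum>a<p. \<Sum>b<q. f a b)"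
proof -
  have "(\<Sum>(a,b)\<in>{..<p}\<times>{..<q}. f a b) = (\<Sum>i<p*q. f (i div q) (i mod q))"
    using assms
    by (intro sum.reindex_bij_witness[of _ "\<lambda>i. (i div q, i mod q)" "\<lambda>(a,b). a*q+b"])
       (auto simp: less_mult_imp_div_less mult_add_less_mult)
  then show ?thesis by (simp add: sum.cartesian_product)
qed

lemma sum_lessThan_double:
  fixes f :: "nat \<Rightarrow> 'a::comm_monoid_add"
  assumes "q > 0"
  shows "(\<Sum>j<2*q. f j) = (\<Sum>j<q. f j) + (\<Sum>j<q. f (q + j))"
  using sum_lessThan_mult_divmod[OF assms, of "\<lambda>a b. f (a*q+b)" 2]
  by (simp add: numeral_2_eq_2)

definition outer :: "(nat \<Rightarrow> complex) \<Rightarrow> cmat" where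
  "outer x = (\<lambda>i j. x i * cnj (x j))"

definition tensor_vec :: "nat \<Rightarrow> (nat \<Rightarrow> complex) \<Rightarrow> (nat \<Rightarrow> complex) \<Rightarrow> nat \<Rightarrow> complex" where
  "tensor_vec q x y = (\<lambda>i. x (i div q) * y (i mod q))"

lemma outer_tensor_vec: "outer (tensor_vec q x y) = kron q (outer x) (outer y)"
  by (simp add: outer_def tensor_vec_def kron_def fun_eq_iff mult_ac)

lemma hermitian_outer: "hermitian_mat d (outer x)"
  by (simp add: hermitian_mat_def outer_def)

lemma quadratic_form_outer:
  "(\<Sum>i<d. \<Sum>j<d. cnj (v i) * outer x i j * v j) =
   (\<Sum>i<d. cnj (v i) * x i) * cnj (\<Sum>j<d. cnj (v j) * x j)"
proof -
  have "(\<Sum>i<d. \<Sum>j<d. cnj (v i) * outer x i j * v j) =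
        (\<Sum>i<d. \<Sum>j<d. (cnj (v i) * x i) * (cnj (x j) * v j))"
    unfolding outer_def by (simp only: mult_ac)
  also have "\<dots> = (\<Sum>i<d. cnj (v i) * x i) * (\<Sum>j<d. cnj (x j) * v j)"
    by (simp only: sum_product)
  finally show ?thesis by (simp add: mult.commute)
qed

lemma psd_outer: "psd_mat d (outer x)"
  unfolding psd_mat_def quadratic_form_outer by (simp only: complex_mult_cnj Re_complex_of_real) simp

lemma trace_outer: "mat_trace d (outer x) = complex_of_real (\<Sum>i<d. (cmod (x i))\<^sup>2)"
  by (simp only: mat_trace_def outer_def complex_mult_cnj of_real_sum) (simp add: cmod_power2)

lemma density_mat_normalize:
  assumes "hermitian_mat d M" "psd_mat d M" "mat_trace d M = complex_of_real t" "t > 0"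
  shows "density_mat d (\<lambda>i j. M i j / complex_of_real t)"
  unfolding density_mat_def
proof (intro conjI)
  show "hermitian_mat d (\<lambda>i j. M i j / complex_of_real t)"
    using assms(1) unfolding hermitian_mat_def
    by (simp only: complex_cnj_divide complex_cnj_complex_of_real) metis
  show "psd_mat d (\<lambda>i j. M i j / complex_of_real t)"
    unfolding psd_mat_def
  proof
    fix v :: "nat \<Rightarrow> complex"
    have "cnj (v i) * (M i j / complex_of_real t) * v j =
          cnj (v i) * M i j * v j / complex_of_real t" for i j
      by simp
    then have "(\<Sum>i<d. \<Sum>j<d. cnj (v i) * (M i j / complex_of_real t) * v j) =
          (\<Sum>i<d. \<Sum>j<d. cnj (v i) * M i j * v j) / complex_of_real t"
      by (simp only: sum_divide_distrib)
    moreover have "0 \<le> Re (\<Sum>i<d. \<Sum>j<d. cnj (v i) * M i j * v j)"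
      using assms(2) unfolding psd_mat_def by blast
    ultimately show "0 \<le> Re (\<Sum>i<d. \<Sum>j<d. cnj (v i) * (M i j / complex_of_real t) * v j)"
      using assms(4) by (simp only: Re_divide_of_real) simp
  qed
  show "mat_trace d (\<lambda>i j. M i j / complex_of_real t) = 1"
    using assms(3,4) unfolding mat_trace_def sum_divide_distrib[symmetric] by simp
qed

lemma density_mat_normalized_outer:
  assumes "(\<Sum>i<d. (cmod (x i))\<^sup>2) > 0"
  shows "density_mat d (\<lambda>i j. outer x i j / complex_of_real (\<Sum>i<d. (cmod (x i))\<^sup>2))"
  by (rule density_mat_normalize[OF hermitian_outer psd_outer trace_outer assms])

lemma trace_kron:
  assumes "q > 0"
  shows "mat_trace (p*q) (kron q R H) = mat_trace p R * mat_trace q H"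
  using sum_lessThan_mult_divmod[OF assms, of "\<lambda>a b. R a a * H b b" p]
  by (simp add: kron_def mat_trace_def sum_product)

inductive product_cone :: "nat \<Rightarrow> nat \<Rightarrow> cmat \<Rightarrow> bool" for p q where
  zero: "product_cone p q (\<lambda>i j. 0)"
| add_outer: "product_cone p q M \<Longrightarrow> product_cone p q (\<lambda>i j. M i j + outer (tensor_vec q x y) i j)"
| mat_eq: "product_cone p q M \<Longrightarrow> mat_eq (p*q) M M' \<Longrightarrow> product_cone p q M'"

lemma product_cone_outer: "product_cone p q (outer (tensor_vec q x y))"
  using product_cone.add_outer[OF product_cone.zero, where x=x and y=y] by simp

lemma product_cone_add:
  "product_cone p q M' \<Longrightarrow> product_cone p q M \<Longrightarrow> product_cone p q (\<lambda>i j. M i j + M' i j)"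
proof (induction M' rule: product_cone.induct)
  case zero
  then show ?case by simp
next
  case (add_outer M' x y)
  from product_cone.add_outer[OF add_outer.IH[OF add_outer.prems], where x=x and y=y]
  show ?case by (simp add: add.assoc)
next
  case (mat_eq M1 M2)
  have "mat_eq (p*q) (\<lambda>i j. M i j + M1 i j) (\<lambda>i j. M i j + M2 i j)"
    using mat_eq(2) by (simp add: mat_eq_def)
  then show ?case by (rule product_cone.mat_eq[OF mat_eq.IH[OF mat_eq.prems]])
qed

lemma product_cone_scale:
  assumes "product_cone p q M" "c \<ge> 0"
  shows "product_cone p q (\<lambda>i j. complex_of_real c * M i j)"
  using assms(1)
proof (induction M rule: product_cone.induct)
  case zero
  have "mat_eq (p*q) (\<lambda>i j. 0) (\<lambda>i j. complex_of_real c * 0)" by (simp add: mat_eq_def)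
  then show ?case by (rule product_cone.mat_eq[OF product_cone.zero])
next
  case (add_outer M x y)
  let ?y = "\<lambda>b. complex_of_real (sqrt c) * y b"
  have "complex_of_real (sqrt c) * cnj (complex_of_real (sqrt c)) = complex_of_real c"
    using assms(2) by (simp flip: of_real_mult)
  then have "outer (tensor_vec q x ?y) i j = complex_of_real c * outer (tensor_vec q x y) i j" for i j
    unfolding outer_def tensor_vec_def complex_cnj_mult
    by (metis (no_types, lifting) mult.assoc mult.left_commute)
  then have "mat_eq (p*q) (\<lambda>i j. complex_of_real c * M i j + outer (tensor_vec q x ?y) i j)
      (\<lambda>i j. complex_of_real c * (M i j + outer (tensor_vec q x y) i j))"
    unfolding mat_eq_def by (simp add: distrib_left)
  then show ?case
    by (rule product_cone.mat_eq[OF product_cone.add_outer[OF add_outer.IH]])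
next
  case (mat_eq M M')
  have "mat_eq (p*q) (\<lambda>i j. complex_of_real c * M i j) (\<lambda>i j. complex_of_real c * M' i j)"
    using mat_eq(2) by (simp add: mat_eq_def)
  then show ?case by (rule product_cone.mat_eq[OF mat_eq.IH])
qed

lemma product_cone_sum:
  "finite S \<Longrightarrow> (\<And>s. s \<in> S \<Longrightarrow> product_cone p q (F s)) \<Longrightarrow>
   product_cone p q (\<lambda>i j. \<Sum>s\<in>S. F s i j)"
proof (induction S rule: finite_induct)
  case empty
  then show ?case by (simp add: product_cone.zero)
next
  case (insert s S)
  have "product_cone p q (\<lambda>i j. (\<Sum>s\<in>S. F s i j) + F s i j)"
    using insert by (intro product_cone_add) auto
  then show ?case using insert(1,2) by (simp add: add.commute)
qed

lemma product_cone_decomposition: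
  assumes "product_cone p q M" "q > 0"
  shows "\<exists>(m::nat) c R H. (\<forall>k<m. c k \<ge> 0 \<and> density_mat p (R k) \<and> density_mat q (H k)) \<and>
      mat_eq (p*q) M (\<lambda>i j. \<Sum>k<m. complex_of_real (c k) * kron q (R k) (H k) i j)"
  using assms(1)
proof (induction M rule: product_cone.induct)
  case zero
  show ?case by (rule exI[of _ "0::nat"]) (simp add: mat_eq_def)
next
  case (add_outer M x y)
  then obtain m :: nat and c R H
    where mc: "\<forall>k<m. c k \<ge> 0 \<and> density_mat p (R k) \<and> density_mat q (H k)"
      and eq: "mat_eq (p*q) M (\<lambda>i j. \<Sum>k<m. complex_of_real (c k) * kron q (R k) (H k) i j)"
    by blast
  define tx where "tx = (\<Sum>i<p. (cmod (x i))\<^sup>2)"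
  define ty where "ty = (\<Sum>i<q. (cmod (y i))\<^sup>2)"
  show ?case
  proof (cases "tx = 0 \<or> ty = 0")
    case True
    then have "(\<forall>a<p. x a = 0) \<or> (\<forall>b<q. y b = 0)"
      unfolding tx_def ty_def by (subst (asm) (1 2) sum_nonneg_eq_0_iff) auto
    then have "outer (tensor_vec q x y) i j = 0" if "i < p*q" for i j
      using that assms(2) by (auto simp: outer_def tensor_vec_def less_mult_imp_div_less)
    then have "mat_eq (p*q) (\<lambda>i j. M i j + outer (tensor_vec q x y) i j)
       (\<lambda>i j. \<Sum>k<m. complex_of_real (c k) * kron q (R k) (H k) i j)"
      using eq by (simp add: mat_eq_def)
    then show ?thesis using mc by blast
  next
    case False
    then have tx: "tx > 0" and ty: "ty > 0"
      unfolding tx_def ty_def by (auto intro!: sum_nonneg simp: less_le)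
    define c' where "c' = c(m := tx * ty)"
    define R' where "R' = R(m := (\<lambda>i j. outer x i j / complex_of_real tx))"
    define H' where "H' = H(m := (\<lambda>i j. outer y i j / complex_of_real ty))"
    have "density_mat p (R' m)" "density_mat q (H' m)"
      using density_mat_normalized_outer tx ty by (simp_all add: R'_def H'_def tx_def ty_def)
    then have P: "\<forall>k<Suc m. c' k \<ge> 0 \<and> density_mat p (R' k) \<and> density_mat q (H' k)"
      using mc tx ty by (auto simp: c'_def R'_def H'_def less_Suc_eq)
    have new: "complex_of_real (c' m) * kron q (R' m) (H' m) i j = outer (tensor_vec q x y) i j" for i j
      using tx ty by (simp add: outer_tensor_vec kron_def R'_def H'_def c'_def field_simps)
    have old: "(\<Sum>k<m. complex_of_real (c' k) * kron q (R' k) (H' k) i j) =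
               (\<Sum>k<m. complex_of_real (c k) * kron q (R k) (H k) i j)" for i j
      by (rule sum.cong) (auto simp: c'_def R'_def H'_def)
    have "mat_eq (p*q) (\<lambda>i j. M i j + outer (tensor_vec q x y) i j)
       (\<lambda>i j. \<Sum>k<Suc m. complex_of_real (c' k) * kron q (R' k) (H' k) i j)"
      using eq unfolding mat_eq_def sum.lessThan_Suc old new by simp
    then show ?thesis using P by blast
  qed
next
  case (mat_eq M M')
  then show ?case by (auto simp: mat_eq_def)
qed

lemma product_cone_separable:
  assumes "product_cone p q \<rho>" "q > 0" "mat_trace (p*q) \<rho> = 1"
  shows "separable p q \<rho>"
proof -
  obtain m :: nat and c R H
    where mc: "\<forall>k<m. c k \<ge> 0 \<and> density_mat p (R k) \<and> density_mat q (H k)"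
      and eq: "mat_eq (p*q) \<rho> (\<lambda>i j. \<Sum>k<m. complex_of_real (c k) * kron q (R k) (H k) i j)"
    using product_cone_decomposition[OF assms(1,2)] by blast
  have "1 = (\<Sum>i<p*q. \<Sum>k<m. complex_of_real (c k) * kron q (R k) (H k) i i)"
    using assms(3) eq by (simp add: mat_trace_def mat_eq_def)
  also have "\<dots> = (\<Sum>k<m. complex_of_real (c k) * mat_trace (p*q) (kron q (R k) (H k)))"
    by (subst sum.swap) (simp add: sum_distrib_left mat_trace_def)
  also have "\<dots> = complex_of_real (\<Sum>k<m. c k)"
    using mc by (simp add: trace_kron[OF assms(2)] density_mat_def)
  finally have "(\<Sum>k<m. c k) = 1"
    by (metis of_real_eq_1_iff)
  then show ?thesis unfolding separable_def using mc eq by blast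
qed

definition root_unity :: "nat \<Rightarrow> complex" where
  "root_unity N = cis (2 * pi / real N)"

lemma root_unity_pow: "root_unity N ^ m = cis (real m * (2 * pi / real N))"
  unfolding root_unity_def by (rule DeMoivre)

lemma root_unity_pow_self: "N > 0 \<Longrightarrow> root_unity N ^ N = 1"
  unfolding root_unity_pow by simp

lemma cnj_root_unity_pow_mult: "cnj (root_unity N ^ m) * root_unity N ^ m = 1"
  unfolding root_unity_pow cis_cnj cis_mult by simp

lemma cis_diff_ne_1:
  assumes "s < N" "s' < N" "s \<noteq> s'"
  shows "cis (2 * pi * (real s - real s') / real N) \<noteq> 1"
proof
  assume "cis (2 * pi * (real s - real s') / real N) = 1"
  then have "cos (2 * pi * (real s - real s') / real N) = 1"
    by (metis cis.sel(1) one_complex.sel(1))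
  then obtain n :: int where n: "2 * pi * (real s - real s') / real N = real_of_int n * 2 * pi"
    using cos_one_2pi_int by blast
  moreover have "N > 0" using assms(1) by simp
  ultimately have "2 * pi * ((real s - real s') - real_of_int n * real N) = 0"
    by (simp add: field_simps)
  then have "real s - real s' = real_of_int n * real N"
    by simp
  then have "int s - int s' = n * int N"
    by (metis of_int_eq_iff of_int_mult of_int_of_nat_eq of_int_diff)
  moreover have "\<bar>int s - int s'\<bar> < int N" "int s - int s' \<noteq> 0"
    using assms by auto
  ultimately have "\<bar>n\<bar> * int N < int N" "n \<noteq> 0"
    by (auto simp: abs_mult)
  then show False
    by (metis abs_ge_zero int_one_le_iff_zero_less mult_le_cancel_right1 not_less
        of_nat_less_0_iff zero_less_abs_iff)
qed

lemma root_unity_orthogonality: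
  assumes "s < N" "s' < N"
  shows "(\<Sum>j<N. root_unity N ^ (j*s) * cnj (root_unity N ^ (j*s'))) =
         (if s = s' then of_nat N else 0)"
proof -
  define z where "z = cis (2 * pi * (real s - real s') / real N)"
  have powers: "root_unity N ^ (j*s) * cnj (root_unity N ^ (j*s')) = z ^ j" for j
  proof -
    have "real (j*s) * (2 * pi / real N) + - (real (j*s') * (2 * pi / real N)) =
        real j * (2 * pi * (real s - real s') / real N)"
      by (simp add: algebra_simps diff_divide_distrib)
    then show ?thesis by (simp only: root_unity_pow cis_cnj cis_mult z_def DeMoivre)
  qed
  show ?thesis
  proof (cases "s = s'")
    case True
    then show ?thesis unfolding powers by (simp add: z_def)
  next
    case False
    have "z ^ N = cis (2 * pi * real_of_int (int s - int s'))"
      using assms by (simp add: z_def DeMoivre)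
    also have "\<dots> = 1" by (rule cis_multiple_2pi) simp
    finally show ?thesis
      using False cis_diff_ne_1[OF assms False] unfolding powers sum_gp_strict z_def by simp
  qed
qed

lemma sum_outer_fourier:
  assumes "N > 0"
  shows "(\<Sum>j<N. outer (\<lambda>k. \<Sum>s<N. root_unity N ^ (j*s) * u s k) i i') =
         of_nat N * (\<Sum>s<N. outer (u s) i i')"
proof -
  let ?\<omega> = "\<lambda>j s s'. root_unity N ^ (j*s) * cnj (root_unity N ^ (j*s'))"
  have "(\<Sum>j<N. outer (\<lambda>k. \<Sum>s<N. root_unity N ^ (j*s) * u s k) i i') =
        (\<Sum>j<N. \<Sum>s<N. \<Sum>s'<N. ?\<omega> j s s' * (u s i * cnj (u s' i')))"
  proof (rule sum.cong[OF refl])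
    fix j
    have "outer (\<lambda>k. \<Sum>s<N. root_unity N ^ (j*s) * u s k) i i' =
      (\<Sum>s<N. \<Sum>s'<N. (root_unity N ^ (j*s) * u s i) * (cnj (root_unity N ^ (j*s')) * cnj (u s' i')))"
      unfolding outer_def cnj_sum complex_cnj_mult by (rule sum_product)
    then show "outer (\<lambda>k. \<Sum>s<N. root_unity N ^ (j*s) * u s k) i i' =
      (\<Sum>s<N. \<Sum>s'<N. ?\<omega> j s s' * (u s i * cnj (u s' i')))"
      by (simp only: mult_ac)
  qed
  also have "\<dots> = (\<Sum>s<N. \<Sum>s'<N. \<Sum>j<N. ?\<omega> j s s' * (u s i * cnj (u s' i')))"
    by (subst sum.swap) (subst (2) sum.swap, rule refl)
  also have "\<dots> = (\<Sum>s<N. \<Sum>s'<N. (\<Sum>j<N. ?\<omega> j s s') * (u s i * cnj (u s' i')))"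
    by (simp only: sum_distrib_right)
  also have "\<dots> = (\<Sum>s<N. \<Sum>s'<N. (if s = s' then of_nat N else 0) * (u s i * cnj (u s' i')))"
    by (intro sum.cong refl) (simp only: root_unity_orthogonality lessThan_iff)
  also have "\<dots> = (\<Sum>s<N. \<Sum>s'<N. if s = s' then of_nat N * (u s i * cnj (u s' i')) else 0)"
    by (intro sum.cong refl) simp
  also have "\<dots> = of_nat N * (\<Sum>s<N. outer (u s) i i')"
    by (simp add: outer_def sum_distrib_left)
  finally show ?thesis .
qed

text \<open>The orbits of the permutation are closed walks partitioning the arcs.\<close>

lemma balanced_arcs_successor_permutation:
  fixes A :: "('a \<times> 'a) set"
  assumes fin: "finite A"
    and balanced: "\<And>v. card {e\<in>A. fst e = v} = card {e\<in>A. snd e = v}"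
  shows "\<exists>\<pi>. \<pi> permutes A \<and> (\<forall>e\<in>A. fst (\<pi> e) = snd e)"
proof -
  have "\<forall>v. \<exists>h. bij_betw h {e\<in>A. snd e = v} {e\<in>A. fst e = v}"
    using fin balanced by (intro allI finite_same_card_bij) auto
  then obtain h where h: "\<And>v. bij_betw (h v) {e\<in>A. snd e = v} {e\<in>A. fst e = v}"
    by (auto dest!: choice)
  define \<pi> where "\<pi> e = (if e \<in> A then h (snd e) e else e)" for e
  have maps: "\<pi> e \<in> A \<and> fst (\<pi> e) = snd e" if "e \<in> A" for e
  proof -
    have "h (snd e) e \<in> {e'\<in>A. fst e' = snd e}"
      using bij_betwE[OF h[of "snd e"]] that by blast
    then show ?thesis using that by (simp add: \<pi>_def)
  qed
  have "inj_on \<pi> A"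
  proof (rule inj_onI)
    fix e1 e2 assume e: "e1 \<in> A" "e2 \<in> A" "\<pi> e1 = \<pi> e2"
    then have "snd e1 = snd e2" using maps by metis
    then show "e1 = e2"
      using inj_onD[OF bij_betw_imp_inj_on[OF h[of "snd e1"]]] e by (simp add: \<pi>_def)
  qed
  moreover have "\<pi> ` A = A"
    using endo_inj_surj[OF fin _ \<open>inj_on \<pi> A\<close>] maps by blast
  ultimately have "\<pi> permutes A"
    by (intro bij_imp_permutes) (auto simp: bij_betw_def \<pi>_def)
  then show ?thesis using maps by blast
qed

lemma sum_shift_periodic:
  fixes F :: "nat \<Rightarrow> 'a::cancel_comm_monoid_add"
  assumes "F N = F 0"
  shows "(\<Sum>s<N. F (Suc s)) = (\<Sum>s<N. F s)"
proof -
  have "F 0 + (\<Sum>s<N. F (Suc s)) = (\<Sum>s<N. F s) + F N"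
    by (simp only: sum.lessThan_Suc_shift flip: sum.lessThan_Suc)
  then show ?thesis using assms by (simp add: add.commute)
qed

definition unit_vec :: "nat \<Rightarrow> nat \<Rightarrow> complex" where
  "unit_vec a = (\<lambda>k. if k = a then 1 else 0)"

definition cross_edge :: "nat \<Rightarrow> nat \<times> nat \<Rightarrow> nat set" where
  "cross_edge q e = {fst e, q + snd e}"

definition cross_vec :: "nat \<Rightarrow> nat \<times> nat \<Rightarrow> nat \<Rightarrow> complex" where
  "cross_vec q e = (\<lambda>k. unit_vec (fst e) k - unit_vec (q + snd e) k)"

definition phase_qubit :: "nat \<Rightarrow> nat \<Rightarrow> nat \<Rightarrow> complex" where
  "phase_qubit N j = (\<lambda>a. if a = 0 then 1 else if a = 1 then - cnj (root_unity N ^ j) else 0)"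

text \<open>Along a closed walk, the head of each arc is the tail of the next one, so the
  second-block part of the Fourier transform is the first-block part shifted by one step,
  i.e.\ multiplied by a phase.\<close>

lemma fourier_closed_walk_tensor:
  fixes P :: "nat \<Rightarrow> nat \<times> nat"
  assumes q: "q > 0" and N: "N > 0" and closed: "P N = P 0"
    and walk: "\<And>s. fst (P (Suc s)) = snd (P s)"
    and bounded: "\<And>s. fst (P s) < q \<and> snd (P s) < q"
  shows "(\<lambda>k. \<Sum>s<N. root_unity N ^ (j*s) * cross_vec q (P s) k) =
         tensor_vec q (phase_qubit N j) (\<lambda>b. \<Sum>s<N. root_unity N ^ (j*s) * unit_vec (fst (P s)) b)"
    (is "?g = tensor_vec q ?a ?f")
proof
  fix k
  consider (first) "k < q" | (second) "q \<le> k" "k < 2*q" | (outside) "2*q \<le> k" by linarith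
  then show "?g k = tensor_vec q ?a ?f k"
  proof cases
    case first
    then show ?thesis
      by (simp add: cross_vec_def unit_vec_def tensor_vec_def phase_qubit_def)
  next
    case second
    then obtain b where k: "k = q + b" "b < q"
      by (metis add_less_cancel_left le_Suc_ex mult_2)
    have divmod: "k div q = 1" "k mod q = b" using k q by simp_all
    define F where "F s = root_unity N ^ (j*s) * unit_vec (fst (P s)) b" for s
    have "root_unity N ^ (j*N) = 1"
      using root_unity_pow_self[OF N] by (simp add: power_mult mult.commute[of j N])
    then have FN: "F N = F 0" by (simp add: F_def closed)
    have FS: "F (Suc s) = root_unity N ^ j * (root_unity N ^ (j*s) * unit_vec (fst (P (Suc s))) b)" for s
      by (simp add: F_def power_add mult_ac)
    have "tensor_vec q ?a ?f k = - cnj (root_unity N ^ j) * (\<Sum>s<N. F s)"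
      by (simp add: tensor_vec_def divmod phase_qubit_def F_def)
    also have "\<dots> = - cnj (root_unity N ^ j) * (\<Sum>s<N. F (Suc s))"
      by (simp only: sum_shift_periodic[OF FN])
    also have "\<dots> = - (\<Sum>s<N. (cnj (root_unity N ^ j) * root_unity N ^ j) *
                           (root_unity N ^ (j*s) * unit_vec (fst (P (Suc s))) b))"
      by (simp only: FS sum_distrib_left mult.assoc mult_minus_left sum_negf)
    also have "\<dots> = - (\<Sum>s<N. root_unity N ^ (j*s) * unit_vec (fst (P (Suc s))) b)"
      by (simp only: cnj_root_unity_pow_mult mult_1_left)
    also have "\<dots> = ?g k"
    proof -
      have "cross_vec q (P s) k = - unit_vec (fst (P (Suc s))) b" for s
        using bounded[of s] k by (auto simp: cross_vec_def unit_vec_def walk)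
      then show ?thesis by (simp add: sum_negf)
    qed
    finally show ?thesis by simp
  next
    case outside
    then have "2 \<le> k div q" using div_le_mono[OF outside, of q] q by simp
    moreover have "cross_vec q (P s) k = 0" for s
      using bounded[of s] outside by (auto simp: cross_vec_def unit_vec_def)
    ultimately show ?thesis by (simp add: tensor_vec_def phase_qubit_def)
  qed
qed

lemma sum_funpow_permutes:
  fixes f :: "'a \<Rightarrow> 'b::comm_semiring_1"
  assumes "\<pi> permutes A"
  shows "(\<Sum>e\<in>A. \<Sum>s<N. f ((\<pi> ^^ s) e)) = of_nat N * (\<Sum>e\<in>A. f e)"
proof -
  have "(\<Sum>e\<in>A. \<Sum>s<N. f ((\<pi> ^^ s) e)) = (\<Sum>s<N. \<Sum>e\<in>A. f ((\<pi> ^^ s) e))"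
    by (rule sum.swap)
  also have "\<dots> = (\<Sum>s<N. \<Sum>e\<in>A. f e)"
    by (intro sum.cong refl sum.reindex_bij_betw permutes_imp_bij permutes_funpow assms)
  finally show ?thesis by simp
qed

lemma product_cone_cross_edges:
  assumes q: "q > 0" and fin: "finite A" and sub: "A \<subseteq> {..<q}\<times>{..<q}"
    and balanced: "\<And>v. card {e\<in>A. fst e = v} = card {e\<in>A. snd e = v}"
  shows "product_cone 2 q (\<lambda>i j. \<Sum>e\<in>A. outer (cross_vec q e) i j)"
proof -
  obtain \<pi> where perm: "\<pi> permutes A" and succ: "\<forall>e\<in>A. fst (\<pi> e) = snd e"
    using balanced_arcs_successor_permutation[OF fin balanced] by blast
  obtain N where N: "\<pi> ^^ N = id" "N > 0"
    using permutation_is_nilpotent permutation_permutes fin perm by blast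
  define P where "P e s = (\<pi> ^^ s) e" for e s
  have bij: "bij_betw (\<pi> ^^ s) A A" for s
    by (rule permutes_imp_bij[OF permutes_funpow[OF perm]])
  have PA: "P e s \<in> A" if "e \<in> A" for e s
    using bij_betwE[OF bij] that by (simp add: P_def)
  have tensor: "(\<lambda>k. \<Sum>s<N. root_unity N ^ (j*s) * cross_vec q (P e s) k) =
      tensor_vec q (phase_qubit N j) (\<lambda>b. \<Sum>s<N. root_unity N ^ (j*s) * unit_vec (fst (P e s)) b)"
    if "e \<in> A" for e j
  proof (rule fourier_closed_walk_tensor[OF q N(2)])
    show "P e N = P e 0" using N(1) by (simp add: P_def)
    show "fst (P e (Suc s)) = snd (P e s)" for s
      using succ PA[OF that, of s] by (simp add: P_def)
    show "fst (P e s) < q \<and> snd (P e s) < q" for s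
      using PA[OF that, of s] sub by auto
  qed
  have orbits: "(\<Sum>e\<in>A. \<Sum>s<N. outer (cross_vec q (P e s)) i i') =
      of_nat N * (\<Sum>e\<in>A. outer (cross_vec q e) i i')" for i i'
    unfolding P_def by (rule sum_funpow_permutes[OF perm])
  let ?T = "\<lambda>e j. outer (tensor_vec q (phase_qubit N j)
              (\<lambda>b. \<Sum>s<N. root_unity N ^ (j*s) * unit_vec (fst (P e s)) b))"
  have "(\<Sum>e\<in>A. \<Sum>j<N. ?T e j i i') = of_nat N * (of_nat N * (\<Sum>e\<in>A. outer (cross_vec q e) i i'))"
    for i i'
  proof -
    have "(\<Sum>e\<in>A. \<Sum>j<N. ?T e j i i') =
        (\<Sum>e\<in>A. \<Sum>j<N. outer (\<lambda>k. \<Sum>s<N. root_unity N ^ (j*s) * cross_vec q (P e s) k) i i')"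
      using tensor by (intro sum.cong refl) simp
    also have "\<dots> = (\<Sum>e\<in>A. of_nat N * (\<Sum>s<N. outer (cross_vec q (P e s)) i i'))"
      by (simp only: sum_outer_fourier[OF N(2)])
    finally show ?thesis by (simp only: orbits flip: sum_distrib_left)
  qed
  then have sum_eq: "(\<Sum>e\<in>A. outer (cross_vec q e) i i') =
      complex_of_real (1 / (real N)\<^sup>2) * (\<Sum>e\<in>A. \<Sum>j<N. ?T e j i i')" for i i'
    using N(2) by (simp add: field_simps power2_eq_square)
  have "product_cone 2 q (\<lambda>i i'. \<Sum>e\<in>A. \<Sum>j<N. ?T e j i i')"
    by (intro product_cone_sum fin finite_lessThan product_cone_outer)
  then show ?thesis
    unfolding sum_eq by (rule product_cone_scale) simp
qed

definition edge_laplacian :: "nat set \<Rightarrow> cmat" where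
  "edge_laplacian e = (\<lambda>i j. if i = j then (if i \<in> e then 1 else 0)
                              else if {i, j} = e then -1 else 0)"

lemma finite_all_edges: "finite (all_edges n)"
proof (rule finite_subset)
  show "all_edges n \<subseteq> Pow {..<n}" unfolding all_edges_def by auto
qed simp

lemma laplacian_eq_sum_edge_laplacian:
  assumes "finite E"
  shows "laplacian E i j = (\<Sum>e\<in>E. edge_laplacian e i j)"
proof (cases "i = j")
  case True
  have "(\<Sum>e\<in>E. edge_laplacian e i j) = of_nat (card (E \<inter> {e. i \<in> e}))"
    using True assms by (simp add: edge_laplacian_def of_bool_def[symmetric])
  moreover have "E \<inter> {e. i \<in> e} = {e \<in> E. i \<in> e}" by auto
  ultimately show ?thesis using True by (simp add: laplacian_def degree_def)
next
  case False
  have "(\<Sum>e\<in>E. edge_laplacian e i j) = (\<Sum>e\<in>E. if e = {i, j} then -1 else 0)"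
    using False by (intro sum.cong refl) (auto simp: edge_laplacian_def)
  then show ?thesis using False assms by (simp add: laplacian_def)
qed

lemma edge_laplacian_outer:
  assumes "u \<noteq> v"
  shows "edge_laplacian {u, v} = outer (\<lambda>k. unit_vec u k - unit_vec v k)"
  using assms by (auto simp: fun_eq_iff edge_laplacian_def outer_def unit_vec_def doubleton_eq_iff)

lemma unit_vec_divmod:
  assumes "b < q"
  shows "unit_vec (a*q+b) k = unit_vec a (k div q) * unit_vec b (k mod q)"
  using assms by (auto simp: unit_vec_def)

lemma product_cone_block_edge:
  assumes "b < q" "b' < q" "b \<noteq> b'"
  shows "product_cone p q (edge_laplacian {a*q+b, a*q+b'})"
proof -
  have "(\<lambda>k. unit_vec (a*q+b) k - unit_vec (a*q+b') k) =
        tensor_vec q (unit_vec a) (\<lambda>k. unit_vec b k - unit_vec b' k)"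
    unfolding unit_vec_divmod[OF assms(1)] unit_vec_divmod[OF assms(2)] tensor_vec_def
    by (simp add: algebra_simps)
  then show ?thesis
    using assms by (simp add: edge_laplacian_outer product_cone_outer)
qed

definition cross_edges :: "nat \<Rightarrow> nat set set" where
  "cross_edges q = cross_edge q ` ({..<q} \<times> {..<q})"

definition cross_pairs :: "nat \<Rightarrow> nat set set \<Rightarrow> (nat \<times> nat) set" where
  "cross_pairs q E = {e \<in> {..<q} \<times> {..<q}. cross_edge q e \<in> E}"

definition cross_matrix :: "nat \<Rightarrow> nat set set \<Rightarrow> nat \<times> nat \<Rightarrow> nat" where
  "cross_matrix q E = restrict (\<lambda>e. if cross_edge q e \<in> E then 1 else 0) ({..<q} \<times> {..<q})"

lemma inj_on_cross_edge: "inj_on (cross_edge q) ({..<q} \<times> UNIV)"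
  by (rule inj_onI) (auto simp: cross_edge_def doubleton_eq_iff prod_eq_iff)

lemma product_cone_non_cross_edge:
  assumes q: "q > 0" and e: "e \<in> all_edges (2*q)" and "e \<notin> cross_edges q"
  shows "product_cone 2 q (edge_laplacian e)"
proof -
  obtain u v where uv: "e = {u, v}" "u < 2*q" "v < 2*q" "u \<noteq> v"
    using e unfolding all_edges_def by blast
  have "e \<noteq> {x, y}" if "x < q" "q \<le> y" "y < 2*q" for x y
  proof
    assume "e = {x, y}"
    then have "e = cross_edge q (x, y - q)" using that by (simp add: cross_edge_def)
    then show False using assms(3) that by (auto simp: cross_edges_def)
  qed
  then have "\<not> (u < q \<and> q \<le> v)" "\<not> (v < q \<and> q \<le> u)"
    using uv by (auto simp: insert_commute)
  then consider "u < q" "v < q" | "q \<le> u" "q \<le> v" by linarith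
  then show ?thesis
  proof cases
    case 1
    then show ?thesis using product_cone_block_edge[of u q v 2 0] uv by simp
  next
    case 2
    then show ?thesis using product_cone_block_edge[of "u-q" q "v-q" 2 1] uv by simp
  qed
qed

lemma sum_edge_laplacian_cross_edges:
  "(\<Sum>e\<in>E \<inter> cross_edges q. edge_laplacian e i j) = (\<Sum>e\<in>cross_pairs q E. outer (cross_vec q e) i j)"
proof -
  have "E \<inter> cross_edges q = cross_edge q ` cross_pairs q E"
    unfolding cross_edges_def cross_pairs_def by auto
  moreover have "inj_on (cross_edge q) (cross_pairs q E)"
    by (rule inj_on_subset[OF inj_on_cross_edge]) (auto simp: cross_pairs_def)
  moreover have "edge_laplacian (cross_edge q e) = outer (cross_vec q e)" if "e \<in> cross_pairs q E" for e
    using that by (auto simp: cross_pairs_def cross_edge_def cross_vec_def edge_laplacian_outer)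
  ultimately show ?thesis by (simp add: sum.reindex)
qed

lemma cross_matrix_apply:
  "b < q \<Longrightarrow> b' < q \<Longrightarrow> cross_matrix q E (b, b') = (if {b, q + b'} \<in> E then 1 else 0)"
  by (simp add: cross_matrix_def cross_edge_def)

lemma line_sum_symmetric_balanced_cross_pairs:
  assumes lss: "line_sum_symmetric q (cross_matrix q E)"
  shows "card {e\<in>cross_pairs q E. fst e = v} = card {e\<in>cross_pairs q E. snd e = v}"
proof (cases "v < q")
  case True
  have rows: "{e\<in>cross_pairs q E. fst e = v} = Pair v ` {j\<in>{..<q}. {v, q + j} \<in> E}"
    and cols: "{e\<in>cross_pairs q E. snd e = v} = (\<lambda>j. (j, v)) ` {j\<in>{..<q}. {j, q + v} \<in> E}"
    using True by (auto simp: cross_pairs_def cross_edge_def)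
  have "card {e\<in>cross_pairs q E. fst e = v} = (\<Sum>j<q. cross_matrix q E (v, j))"
    unfolding rows using True by (simp add: card_image inj_on_def cross_matrix_apply sum.If_cases Int_def)
  also have "\<dots> = (\<Sum>j<q. cross_matrix q E (j, v))"
    using lss True unfolding line_sum_symmetric_def by blast
  also have "\<dots> = card {e\<in>cross_pairs q E. snd e = v}"
    unfolding cols using True by (simp add: card_image inj_on_def cross_matrix_apply sum.If_cases Int_def)
  finally show ?thesis .
next
  case False
  then have "{e\<in>cross_pairs q E. fst e = v} = {}" "{e\<in>cross_pairs q E. snd e = v} = {}"
    by (auto simp: cross_pairs_def)
  then show ?thesis by (simp only: card.empty)
qed

lemma trace_laplacian_pos:
  assumes "E \<subseteq> all_edges n" "E \<noteq> {}"
  shows "mat_trace n (laplacian E) = of_nat (\<Sum>i<n. degree E i)" and "(\<Sum>i<n. degree E i) > 0"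
proof -
  show "mat_trace n (laplacian E) = of_nat (\<Sum>i<n. degree E i)"
    by (simp add: mat_trace_def laplacian_def)
  obtain u v where uv: "{u, v} \<in> E" "u < n"
    using assms unfolding all_edges_def by blast
  have "finite E" using finite_subset[OF assms(1) finite_all_edges] .
  then have "degree E u > 0"
    unfolding degree_def using uv(1) by (subst card_gt_0_iff) auto
  then show "(\<Sum>i<n. degree E i) > 0"
    using uv(2) by (intro sum_pos2[of _ u]) auto
qed

lemma separable_if_line_sum_symmetric:
  assumes q: "q > 0" and sub: "E \<subseteq> all_edges (2*q)" and ne: "E \<noteq> {}"
    and lss: "line_sum_symmetric q (cross_matrix q E)"
  shows "separable 2 q (norm_laplacian (2*q) E)"
proof -
  have fin: "finite E" using finite_subset[OF sub finite_all_edges] .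
  have "cross_pairs q E \<subseteq> {..<q}\<times>{..<q}" unfolding cross_pairs_def by auto
  then have cross: "product_cone 2 q (\<lambda>i j. \<Sum>e\<in>E \<inter> cross_edges q. edge_laplacian e i j)"
    unfolding sum_edge_laplacian_cross_edges
    by (intro product_cone_cross_edges[OF q] line_sum_symmetric_balanced_cross_pairs[OF lss])
       (auto intro: finite_subset)
  have non_cross: "product_cone 2 q (\<lambda>i j. \<Sum>e\<in>E - cross_edges q. edge_laplacian e i j)"
    using fin sub by (intro product_cone_sum product_cone_non_cross_edge[OF q]) auto
  have "laplacian E = (\<lambda>i j. (\<Sum>e\<in>E \<inter> cross_edges q. edge_laplacian e i j) +
                              (\<Sum>e\<in>E - cross_edges q. edge_laplacian e i j))"
    using fin by (simp add: fun_eq_iff laplacian_eq_sum_edge_laplacian sum.Int_Diff)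
  then have cone: "product_cone 2 q (laplacian E)"
    using product_cone_add[OF non_cross cross] by simp
  define T where "T = (\<Sum>i<2*q. degree E i)"
  have tr: "mat_trace (2*q) (laplacian E) = of_nat T" and T: "T > 0"
    using trace_laplacian_pos[OF sub ne] by (simp_all add: T_def)
  have "norm_laplacian (2*q) E = (\<lambda>i j. complex_of_real (1 / real T) * laplacian E i j)"
    unfolding norm_laplacian_def tr by (simp add: fun_eq_iff divide_inverse mult.commute)
  then have "product_cone 2 q (norm_laplacian (2*q) E)"
    using product_cone_scale[OF cone, of "1 / real T"] by simp
  moreover have "mat_trace (2*q) (norm_laplacian (2*q) E) = 1"
    using tr T by (simp add: norm_laplacian_def mat_trace_def flip: sum_divide_distrib)
  ultimately show ?thesis using product_cone_separable[OF _ q] by simp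
qed

lemma sum_entries_kron:
  assumes q: "q > 0"
  shows "(\<Sum>i<p*q. \<Sum>j<p*q. kron q R H i j) = (\<Sum>a<p. \<Sum>a'<p. R a a') * (\<Sum>b<q. \<Sum>b'<q. H b b')"
proof -
  have rows: "(\<Sum>j<p*q. kron q R H i j) = (\<Sum>a'<p. R (i div q) a') * (\<Sum>b'<q. H (i mod q) b')" for i
  proof -
    have "(\<Sum>j<p*q. kron q R H i j) =
          (\<Sum>j<p*q. (\<lambda>a' b'. R (i div q) a' * H (i mod q) b') (j div q) (j mod q))"
      by (simp add: kron_def)
    also have "\<dots> = (\<Sum>a'<p. \<Sum>b'<q. R (i div q) a' * H (i mod q) b')"
      by (rule sum_lessThan_mult_divmod[OF q])
    finally show ?thesis by (simp only: sum_product)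
  qed
  have "(\<Sum>i<p*q. \<Sum>j<p*q. kron q R H i j) =
        (\<Sum>i<p*q. (\<lambda>a b. (\<Sum>a'<p. R a a') * (\<Sum>b'<q. H b b')) (i div q) (i mod q))"
    by (simp only: rows)
  also have "\<dots> = (\<Sum>a<p. \<Sum>b<q. (\<Sum>a'<p. R a a') * (\<Sum>b'<q. H b b'))"
    by (rule sum_lessThan_mult_divmod[OF q])
  finally show ?thesis by (simp only: sum_product)
qed

lemma hermitian_col_sum:
  assumes "hermitian_mat d X" "j < d"
  shows "(\<Sum>i<d. X i j) = cnj (\<Sum>i<d. X j i)"
  unfolding cnj_sum
proof (rule sum.cong[OF refl])
  fix i assume "i \<in> {..<d}"
  then show "X i j = cnj (X j i)" using assms unfolding hermitian_mat_def by blast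
qed

lemma sum_entries_psd_nonneg:
  assumes h: "hermitian_mat d X" and p: "psd_mat d X"
  shows "0 \<le> (\<Sum>i<d. \<Sum>j<d. X i j)"
proof -
  let ?s = "\<Sum>i<d. \<Sum>j<d. X i j"
  have "0 \<le> Re ?s"
    using p unfolding psd_mat_def by (drule_tac x="\<lambda>_. 1" in spec) simp
  moreover have "cnj ?s = ?s"
    using hermitian_col_sum[OF h] unfolding cnj_sum by (subst sum.swap) simp
  then have "Im ?s = 0"
    by (metis Reals_cnj_iff complex_is_Real_iff)
  ultimately show ?thesis
    unfolding less_eq_complex_def by simp
qed

lemma nonpos_if_quadratic_nonneg:
  fixes S a :: real
  assumes a: "a \<ge> 0" and nonneg: "\<And>t. t > 0 \<Longrightarrow> 0 \<le> t * t * a - 2 * t * S"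
  shows "S \<le> 0"
proof (rule ccontr)
  assume "\<not> S \<le> 0"
  define t where "t = S / (a + 1)"
  have t: "t > 0" using \<open>\<not> S \<le> 0\<close> a unfolding t_def by simp
  have "t * a < S"
    using \<open>\<not> S \<le> 0\<close> a unfolding t_def by (simp add: field_simps)
  then have "t * (t * a) < t * (2 * S)"
    using t \<open>\<not> S \<le> 0\<close> by (intro mult_strict_left_mono) linarith+
  then show False using nonneg[OF t] by (simp add: algebra_simps)
qed

text \<open>A positive semidefinite matrix annihilates every vector \<open>v\<close> with \<open>v\<^sup>* X v = 0\<close>; here \<open>v\<close> is
  the all-ones vector. With \<open>w = X v\<close>, positivity of the form at \<open>v - t w\<close> gives
  \<open>0 \<le> -2 t |w|\<^sup>2 + t\<^sup>2 (w\<^sup>* X w)\<close> for all \<open>t > 0\<close>, which forces \<open>w = 0\<close>.\<close>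

lemma psd_zero_sum_entries_row_sum:
  assumes h: "hermitian_mat d X" and p: "psd_mat d X"
    and z: "(\<Sum>i<d. \<Sum>j<d. X i j) = 0" and i: "i < d"
  shows "(\<Sum>j<d. X i j) = 0"
proof -
  define w where "w i = (\<Sum>j<d. X i j)" for i
  define S where "S = (\<Sum>i<d. (cmod (w i))\<^sup>2)"
  define Q where "Q v = (\<Sum>i<d. \<Sum>j<d. cnj (v i) * X i j * v j)" for v
  define a where "a = Re (Q w)"
  have Q_nonneg: "0 \<le> Re (Q v)" for v using p unfolding Q_def psd_mat_def by blast
  have norms: "(\<Sum>i<d. cnj (w i) * w i) = complex_of_real S"
    unfolding S_def of_real_sum by (intro sum.cong refl) (simp only: complex_norm_square mult.commute)
  have left: "(\<Sum>i<d. \<Sum>j<d. cnj (w i) * X i j) = complex_of_real S"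
    by (simp add: w_def sum_distrib_left norms[symmetric])
  have "(\<Sum>i<d. \<Sum>j<d. X i j * w j) = (\<Sum>j<d. (\<Sum>i<d. X i j) * w j)"
    by (subst sum.swap) (simp add: sum_distrib_right)
  also have "\<dots> = complex_of_real S"
    unfolding norms[symmetric] w_def using hermitian_col_sum[OF h] by (intro sum.cong) auto
  finally have right: "(\<Sum>i<d. \<Sum>j<d. X i j * w j) = complex_of_real S" .
  have expand: "Re (Q (\<lambda>k. 1 - complex_of_real t * w k)) = t * t * a - 2 * t * S" for t
  proof -
    let ?c = "complex_of_real t"
    have "cnj (1 - ?c * w i) * X i j * (1 - ?c * w j) =
       X i j - ?c * (cnj (w i) * X i j) - ?c * (X i j * w j) + ?c * ?c * (cnj (w i) * X i j * w j)"
      for i j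
      by (simp add: algebra_simps)
    then have "Q (\<lambda>k. 1 - ?c * w k) = (\<Sum>i<d. \<Sum>j<d. X i j) - ?c * (\<Sum>i<d. \<Sum>j<d. cnj (w i) * X i j)
       - ?c * (\<Sum>i<d. \<Sum>j<d. X i j * w j) + ?c * ?c * Q w"
      unfolding Q_def by (simp add: sum.distrib sum_subtractf sum_distrib_left)
    then show ?thesis unfolding z left right a_def by simp
  qed
  have "S \<le> 0"
  proof (rule nonpos_if_quadratic_nonneg)
    show "a \<ge> 0" unfolding a_def by (rule Q_nonneg)
    show "0 \<le> t * t * a - 2 * t * S" for t
      using Q_nonneg[of "\<lambda>k. 1 - complex_of_real t * w k"] unfolding expand .
  qed
  moreover have "S \<ge> 0" unfolding S_def by (intro sum_nonneg) simp
  ultimately have "S = 0" by simp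
  then show ?thesis
    using i unfolding S_def w_def by (subst (asm) sum_nonneg_eq_0_iff) auto
qed

lemma psd_kron_partial_row_sum_zero:
  assumes R: "hermitian_mat p R" "psd_mat p R" and H: "hermitian_mat q H" "psd_mat q H"
    and zero: "(\<Sum>a<p. \<Sum>a'<p. R a a') * (\<Sum>b<q. \<Sum>b'<q. H b b') = 0"
    and a': "a' < p" and b: "b < q"
  shows "(\<Sum>a<p. R a a') * (\<Sum>b'<q. H b b') = 0"
  using zero[unfolded mult_eq_0_iff]
proof (elim disjE)
  assume "(\<Sum>a<p. \<Sum>a'<p. R a a') = 0"
  then have "(\<Sum>a<p. R a' a) = 0"
    using psd_zero_sum_entries_row_sum[OF R] a' by blast
  then show ?thesis using hermitian_col_sum[OF R(1) a'] by simp
next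
  assume "(\<Sum>b<q. \<Sum>b'<q. H b b') = 0"
  then show ?thesis using psd_zero_sum_entries_row_sum[OF H] b by simp
qed

lemma separable_zero_row_sums_partial:
  assumes sep: "separable p q \<rho>" and q: "q > 0"
    and rows: "\<And>i. i < p*q \<Longrightarrow> (\<Sum>j<p*q. \<rho> i j) = 0"
    and b: "b < q" and a': "a' < p"
  shows "(\<Sum>a<p. \<Sum>b'<q. \<rho> (a*q+b) (a'*q+b')) = 0"
proof -
  obtain m :: nat and c R H
    where mc: "\<forall>k<m. c k \<ge> 0 \<and> density_mat p (R k) \<and> density_mat q (H k)"
      and eq: "mat_eq (p*q) \<rho> (\<lambda>i j. \<Sum>k<m. complex_of_real (c k) * kron q (R k) (H k) i j)"
    using sep unfolding separable_def by blast
  have R: "hermitian_mat p (R k)" "psd_mat p (R k)"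
    and H: "hermitian_mat q (H k)" "psd_mat q (H k)" if "k < m" for k
    using mc that unfolding density_mat_def by auto
  define sR where "sR k = (\<Sum>a<p. \<Sum>a'<p. R k a a')" for k
  define sH where "sH k = (\<Sum>b<q. \<Sum>b'<q. H k b b')" for k
  have "(\<Sum>k<m. complex_of_real (c k) * (sR k * sH k)) =
        (\<Sum>k<m. complex_of_real (c k) * (\<Sum>i<p*q. \<Sum>j<p*q. kron q (R k) (H k) i j))"
    by (simp only: sR_def sH_def sum_entries_kron[OF q])
  also have "\<dots> = (\<Sum>i<p*q. \<Sum>j<p*q. \<Sum>k<m. complex_of_real (c k) * kron q (R k) (H k) i j)"
    by (simp add: sum_distrib_left sum.swap[of _ "{..<m}"])
  also have "\<dots> = (\<Sum>i<p*q. \<Sum>j<p*q. \<rho> i j)"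
    using eq unfolding mat_eq_def by (intro sum.cong refl) simp
  also have "\<dots> = 0" by (simp add: rows)
  finally have total: "(\<Sum>k<m. complex_of_real (c k) * (sR k * sH k)) = 0" .
  have "0 \<le> complex_of_real (c k) * (sR k * sH k)" if "k < m" for k
    using mc that sum_entries_psd_nonneg[OF R[OF that]] sum_entries_psd_nonneg[OF H[OF that]]
    unfolding sR_def sH_def by (intro mult_nonneg_nonneg) (auto simp: less_eq_complex_def)
  then have "complex_of_real (c k) * (sR k * sH k) = 0" if "k < m" for k
    using total that by (subst (asm) sum_nonneg_eq_0_iff) auto
  then have factor_zero: "complex_of_real (c k) * ((\<Sum>a<p. R k a a') * (\<Sum>b'<q. H k b b')) = 0"
    if "k < m" for k
    using psd_kron_partial_row_sum_zero[OF R[OF that] H[OF that] _ a' b] that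
    unfolding sR_def sH_def by fastforce
  have "(\<Sum>a<p. \<Sum>b'<q. \<rho> (a*q+b) (a'*q+b')) =
        (\<Sum>a<p. \<Sum>b'<q. \<Sum>k<m. complex_of_real (c k) * (R k a a' * H k b b'))"
    using eq b a' q by (intro sum.cong refl) (simp add: mat_eq_def kron_def mult_add_less_mult)
  also have "\<dots> = (\<Sum>k<m. \<Sum>a<p. \<Sum>b'<q. complex_of_real (c k) * (R k a a' * H k b b'))"
    by (simp only: sum.swap[of _ "{..<m}"])
  also have "\<dots> = (\<Sum>k<m. complex_of_real (c k) * ((\<Sum>a<p. R k a a') * (\<Sum>b'<q. H k b b')))"
    by (subst sum_product) (simp only: sum_distrib_left)
  also have "\<dots> = 0" using factor_zero by (intro sum.neutral) blast
  finally show ?thesis .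
qed

lemma sum_row_laplacian:
  assumes sub: "E \<subseteq> all_edges n"
  shows "(\<Sum>j<n. laplacian E i j) = 0"
proof -
  have fin: "finite E" using finite_subset[OF sub finite_all_edges] .
  have "(\<Sum>j<n. edge_laplacian e i j) = 0" if e: "e \<in> E" for e
  proof -
    obtain u v where uv: "e = {u, v}" "u < n" "v < n" "u \<noteq> v"
      using sub e unfolding all_edges_def by blast
    have "(\<Sum>j<n. unit_vec u j - unit_vec v j) = 0"
      using uv by (simp add: sum_subtractf unit_vec_def)
    moreover have "(\<Sum>j<n. edge_laplacian e i j) =
        (unit_vec u i - unit_vec v i) * cnj (\<Sum>j<n. unit_vec u j - unit_vec v j)"
      unfolding uv(1) edge_laplacian_outer[OF uv(4)] outer_def
      by (simp only: cnj_sum sum_distrib_left)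
    ultimately show ?thesis by simp
  qed
  then show ?thesis
    unfolding laplacian_eq_sum_edge_laplacian[OF fin] by (subst sum.swap) simp
qed

lemma line_sum_symmetric_if_separable:
  assumes q: "q > 0" and sub: "E \<subseteq> all_edges (2*q)" and ne: "E \<noteq> {}"
    and sep: "separable 2 q (norm_laplacian (2*q) E)"
  shows "line_sum_symmetric q (cross_matrix q E)"
  unfolding line_sum_symmetric_def
proof (intro allI impI)
  fix b assume b: "b < q"
  define \<rho> where "\<rho> = norm_laplacian (2*q) E"
  define T where "T = (\<Sum>i<2*q. degree E i)"
  have "mat_trace (2*q) (laplacian E) = of_nat T" and T: "T > 0"
    using trace_laplacian_pos[OF sub ne] by (simp_all add: T_def)
  then have \<rho>: "\<rho> i j = laplacian E i j / of_nat T" for i j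
    by (simp add: \<rho>_def norm_laplacian_def)
  have rows: "(\<Sum>j<2*q. \<rho> i j) = 0" for i
    unfolding \<rho> by (simp add: sum_row_laplacian[OF sub] flip: sum_divide_distrib)
  have "(\<Sum>b'<q. \<rho> b b') + (\<Sum>b'<q. \<rho> (q + b) b') = 0"
    using separable_zero_row_sums_partial[OF sep[folded \<rho>_def] q rows b, of 0]
    by (simp add: numeral_2_eq_2)
  moreover have "(\<Sum>b'<q. \<rho> b b') + (\<Sum>b'<q. \<rho> b (q + b')) = 0"
    using rows[of b] by (simp add: sum_lessThan_double[OF q])
  ultimately have "(\<Sum>b'<q. \<rho> b (q + b')) = (\<Sum>b'<q. \<rho> (q + b) b')"
    by (metis add_left_cancel)
  moreover have "\<rho> b (q + b') = - of_nat (cross_matrix q E (b, b')) / of_nat T"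
    and "\<rho> (q + b) b' = - of_nat (cross_matrix q E (b', b)) / of_nat T" if "b' < q" for b'
    using b that by (simp_all add: \<rho> laplacian_def cross_matrix_apply insert_commute)
  ultimately have "(\<Sum>b'<q. of_nat (cross_matrix q E (b, b')) :: complex) =
                   (\<Sum>b'<q. of_nat (cross_matrix q E (b', b)))"
    using T by (simp add: sum_negf flip: sum_divide_distrib)
  then show "(\<Sum>j<q. cross_matrix q E (b, j)) = (\<Sum>j<q. cross_matrix q E (j, b))"
    by (simp only: of_nat_eq_iff flip: of_nat_sum)
qed

lemma separable_iff_line_sum_symmetric:
  assumes "q > 0" "E \<subseteq> all_edges (2*q)" "E \<noteq> {}"
  shows "separable 2 q (norm_laplacian (2*q) E) \<longleftrightarrow> line_sum_symmetric q (cross_matrix q E)"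
  using separable_if_line_sum_symmetric[OF assms] line_sum_symmetric_if_separable[OF assms] by blast

lemma card_subsets_pred_Int:
  assumes fin: "finite U" and XU: "X \<subseteq> U" and PX: "\<And>E. P E = P (E \<inter> X)"
  shows "card {E. E \<subseteq> U \<and> P E} = 2 ^ card (U - X) * card {F. F \<subseteq> X \<and> P F}"
proof -
  let ?A = "Pow (U - X) \<times> {F. F \<subseteq> X \<and> P F}"
  have "bij_betw (\<lambda>a. fst a \<union> snd a) ?A {E. E \<subseteq> U \<and> P E}"
  proof (rule bij_betw_byWitness[where f' = "\<lambda>E. (E - X, E \<inter> X)"])
    show "\<forall>a\<in>?A. (fst a \<union> snd a - X, (fst a \<union> snd a) \<inter> X) = a"
      by (auto simp: prod_eq_iff)
    show "(\<lambda>a. fst a \<union> snd a) ` ?A \<subseteq> {E. E \<subseteq> U \<and> P E}"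
    proof (rule image_subsetI)
      fix a assume a: "a \<in> ?A"
      then have "(fst a \<union> snd a) \<inter> X = snd a" by auto
      then show "fst a \<union> snd a \<in> {E. E \<subseteq> U \<and> P E}"
        using a XU PX[of "fst a \<union> snd a"] by auto
    qed
  qed (use PX in auto)
  then have "card {E. E \<subseteq> U \<and> P E} = card ?A"
    by (rule bij_betw_same_card[symmetric])
  then show ?thesis using fin by (simp add: card_cartesian_product card_Pow)
qed

lemma card_all_edges: "card (all_edges n) = n * (n - 1) div 2"
proof -
  have "all_edges n = {A. A \<subseteq> {..<n} \<and> card A = 2}"
    unfolding all_edges_def by (auto simp: card_2_iff)
  then show ?thesis by (simp add: n_subsets choose_two)
qed

lemma cross_edges_subset_all_edges: "cross_edges q \<subseteq> all_edges (2*q)"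
  unfolding cross_edges_def cross_edge_def all_edges_def by fastforce

lemma card_cross_edges: "card (cross_edges q) = q * q"
  unfolding cross_edges_def
  by (subst card_image[OF inj_on_subset[OF inj_on_cross_edge]]) (auto simp: card_cartesian_product)

lemma card_non_cross_edges: "card (all_edges (2*q) - cross_edges q) = q * (q - 1)"
proof -
  have "card (all_edges (2*q) - cross_edges q) = 2*q*(2*q-1) div 2 - q*q"
    by (simp add: card_Diff_subset finite_subset[OF cross_edges_subset_all_edges finite_all_edges]
                  cross_edges_subset_all_edges card_all_edges card_cross_edges)
  also have "\<dots> = q * (q - 1)"
    by (cases q) (simp_all add: algebra_simps)
  finally show ?thesis .
qed

lemma cross_matrix_Int_cross_edges: "cross_matrix q (E \<inter> cross_edges q) = cross_matrix q E"
  unfolding cross_matrix_def cross_edges_def by (intro restrict_ext) auto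

lemma card_zero_one_mats: "card (zero_one_mats q) = 2 ^ (q\<^sup>2)"
  unfolding zero_one_mats_def
  by (simp add: card_PiE card_cartesian_product power2_eq_square) (metis numeral_2_eq_2)

lemma bij_betw_cross_matrix: "bij_betw (cross_matrix q) (Pow (cross_edges q)) (zero_one_mats q)"
proof -
  let ?I = "{..<q}\<times>{..<q}"
  let ?edges = "\<lambda>M. cross_edge q ` {e \<in> ?I. M e = 1}"
  have inj: "inj_on (cross_edge q) ?I"
    by (rule inj_on_subset[OF inj_on_cross_edge]) auto
  have left: "?edges (cross_matrix q F) = F" if "F \<subseteq> cross_edges q" for F
  proof -
    have "{e \<in> ?I. cross_matrix q F e = 1} = {e \<in> ?I. cross_edge q e \<in> F}"
      by (auto simp: cross_matrix_def)
    then show ?thesis using that unfolding cross_edges_def by blast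
  qed
  have right: "cross_matrix q (?edges M) = M" if M: "M \<in> zero_one_mats q" for M
  proof
    fix e
    show "cross_matrix q (?edges M) e = M e"
    proof (cases "e \<in> ?I")
      case True
      have "{e \<in> ?I. M e = 1} \<subseteq> ?I" by blast
      from inj_on_image_mem_iff[OF inj True this]
      have "cross_edge q e \<in> ?edges M \<longleftrightarrow> M e = 1" using True by simp
      moreover have "M e \<in> {0, 1}"
        using PiE_mem[OF M[unfolded zero_one_mats_def] True] .
      ultimately show ?thesis
        using True unfolding cross_matrix_def by auto
    next
      case False
      then show ?thesis
        using PiE_arb[OF M[unfolded zero_one_mats_def] False] by (simp add: cross_matrix_def)
    qed
  qed
  show ?thesis
  proof (rule bij_betw_byWitness[where f' = ?edges])
    show "cross_matrix q ` Pow (cross_edges q) \<subseteq> zero_one_mats q"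
    proof (rule image_subsetI)
      show "cross_matrix q F \<in> zero_one_mats q" for F
        unfolding zero_one_mats_def cross_matrix_def restrict_PiE_iff by simp
    qed
    show "?edges ` zero_one_mats q \<subseteq> Pow (cross_edges q)"
      unfolding cross_edges_def by blast
  qed (use left right in blast)+
qed

lemma bij_betw_Collect_pred:
  assumes "bij_betw f A B"
  shows "bij_betw f {x\<in>A. Q (f x)} {y\<in>B. Q y}"
proof -
  have "f ` {x\<in>A. Q (f x)} = {y\<in>B. Q y}"
    using bij_betw_imp_surj_on[OF assms] by blast
  moreover have "inj_on f {x\<in>A. Q (f x)}"
    using bij_betw_imp_inj_on[OF assms] by (rule inj_on_subset) auto
  ultimately show ?thesis unfolding bij_betw_def by blast
qed

lemma line_sum_symmetric_cross_matrix_empty: "line_sum_symmetric q (cross_matrix q {})"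
  unfolding line_sum_symmetric_def by (simp add: cross_matrix_apply)

lemma card_graphs_by_cross_matrix:
  fixes Q :: "bool \<Rightarrow> bool"
  shows "card {E. E \<subseteq> all_edges (2*q) \<and> Q (line_sum_symmetric q (cross_matrix q E))} =
         2 ^ (q * (q - 1)) * card {M \<in> zero_one_mats q. Q (line_sum_symmetric q M)}"
proof -
  have "{F. F \<subseteq> cross_edges q \<and> Q (line_sum_symmetric q (cross_matrix q F))} =
        {F \<in> Pow (cross_edges q). Q (line_sum_symmetric q (cross_matrix q F))}"
    by blast
  then have "card {F. F \<subseteq> cross_edges q \<and> Q (line_sum_symmetric q (cross_matrix q F))} =
             card {M \<in> zero_one_mats q. Q (line_sum_symmetric q M)}"
    using bij_betw_same_card[OF bij_betw_Collect_pred[OF bij_betw_cross_matrix]] by simp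
  then show ?thesis
    using card_subsets_pred_Int[OF finite_all_edges cross_edges_subset_all_edges,
            of "\<lambda>E. Q (line_sum_symmetric q (cross_matrix q E))"]
    by (simp add: cross_matrix_Int_cross_edges card_non_cross_edges)
qed

theorem mainTheorem5:
  fixes q :: nat
  assumes "q \<ge> 1"
  shows "int (L_s 2 q) = 2 ^ (q * (q - 1)) * int (N_s q) - 1
         \<and> L_e 2 q = 2 ^ (q * (q - 1)) * N_e q"
proof -
  have q: "q > 0" using assms by simp
  let ?graphs = "\<lambda>Q. {E. E \<subseteq> all_edges (2*q) \<and> Q (line_sum_symmetric q (cross_matrix q E))}"
  have "{} \<in> ?graphs id" "finite (?graphs id)"
    using line_sum_symmetric_cross_matrix_empty[of q] finite_all_edges
    by (auto intro: finite_subset[of _ "Pow (all_edges (2*q))"])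
  then have "card (?graphs id) \<ge> 1"
    by (simp add: Suc_le_eq card_gt_0_iff) blast
  moreover have "L_s 2 q = card (?graphs id - {{}})"
    unfolding L_s_def using separable_iff_line_sum_symmetric[OF q]
    by (intro arg_cong[where f = card]) auto
  then have "L_s 2 q = card (?graphs id) - 1"
    using \<open>{} \<in> ?graphs id\<close> by (simp add: card_Diff_singleton)
  moreover have "L_e 2 q = card (?graphs Not)"
    unfolding L_e_def using separable_iff_line_sum_symmetric[OF q] line_sum_symmetric_cross_matrix_empty[of q]
    by (intro arg_cong[where f = card]) auto
  moreover have "card {M \<in> zero_one_mats q. \<not> line_sum_symmetric q M} = N_e q"
  proof -
    have "finite (zero_one_mats q)" unfolding zero_one_mats_def by (simp add: finite_PiE)
    then have "card (zero_one_mats q - {M \<in> zero_one_mats q. line_sum_symmetric q M}) =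
               2 ^ q\<^sup>2 - N_s q"
      unfolding N_s_def by (subst card_Diff_subset) (auto simp: card_zero_one_mats)
    moreover have "zero_one_mats q - {M \<in> zero_one_mats q. line_sum_symmetric q M} =
                   {M \<in> zero_one_mats q. \<not> line_sum_symmetric q M}" by blast
    ultimately show ?thesis by (simp add: N_e_def)
  qed
  ultimately show ?thesis
    using card_graphs_by_cross_matrix[of q id] card_graphs_by_cross_matrix[of q Not]
    by (simp add: N_s_def of_nat_diff)
qed

end
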